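(* Let $G$ be a torsion abelian group and $\varphi\colon G\to G$ an endomorphism. Then $\varphi$ is positively expansive if and only if it is a factor of a unilateral Bernoulli shift $\sigma\colon S^{(\mathbb N)}\to S^{(\mathbb N)}$ for some finite abelian group $S$. Analogously, an automorphism $\varphi\colon G\to G$ is expansive if and only if it is a factor of a bilateral Bernoulli shift $\sigma\colon S^{(\mathbb Z)}\to S^{(\mathbb Z)}$ for some finite abelian group $S$.
   Context: $\mathbb N=\{0,1,2,\dots\}$. An endomorphism $\varphi$ of an abelian group $G$ is positively expansive if there is a finite subgroup $S\leq G$ such that for every finite subgroup $F\leq G$ there is $n\in\mathbb N$ with $F\subseteq\sum_{k=0}^n\varphi^kS$; an automorphism is expansive if the same holds with $\sum_{|k|\leq n}\varphi^kS$ in place of $\sum_{k=0}^n\varphi^kS$. For $I\in\{\mathbb N,\mathbb Z\}$ and a finite abelian group $S$, $S^{(I)}=\bigoplus_{k\in I}S$ (finitely supported sequences), and the shift $\sigma\colon S^{(I)}\to S^{(I)}$ is $\sigma((s_k))=(s_{k-1})$, with the convention $s_{-1}=0$ when $I=\mathbb N$. An endomorphism $\psi\colon H\to H$ is a factor of $\varphi\colon G\to G$ if there is a surjective homomorphism $\pi\colon G\to H$ with $\pi\circ\varphi=\psi\circ\pi$. *)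

theory Defs
  imports "HOL-Algebra.Algebra"
begin

text \<open>Abelian groups are HOL-Algebra structures (written multiplicatively).\<close>

definition torsion_group :: "('a, 'm) monoid_scheme \<Rightarrow> bool" where
  "torsion_group G \<longleftrightarrow> (\<forall>x \<in> carrier G. \<exists>n::nat. n > 0 \<and> x [^]\<^bsub>G\<^esub> n = \<one>\<^bsub>G\<^esub>)"

definition set_sum_list :: "('a, 'm) monoid_scheme \<Rightarrow> ('i \<Rightarrow> 'a set) \<Rightarrow> 'i list \<Rightarrow> 'a set" where
  "set_sum_list G A ks = foldr (\<lambda>k acc. A k <#>\<^bsub>G\<^esub> acc) ks {\<one>\<^bsub>G\<^esub>}"

definition auto_pow :: "('a, 'm) monoid_scheme \<Rightarrow> ('a \<Rightarrow> 'a) \<Rightarrow> int \<Rightarrow> 'a \<Rightarrow> 'a" where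
  "auto_pow G \<phi> k = (if k \<ge> 0 then \<phi> ^^ nat k else (inv_into (carrier G) \<phi>) ^^ nat (- k))"

definition positively_expansive :: "('a, 'm) monoid_scheme \<Rightarrow> ('a \<Rightarrow> 'a) \<Rightarrow> bool" where
  "positively_expansive G \<phi> \<longleftrightarrow>
     (\<exists>S. subgroup S G \<and> finite S \<and>
        (\<forall>F. subgroup F G \<and> finite F \<longrightarrow>
           (\<exists>n::nat. F \<subseteq> set_sum_list G (\<lambda>k. (\<phi> ^^ k) ` S) [0..<Suc n])))"

definition expansive :: "('a, 'm) monoid_scheme \<Rightarrow> ('a \<Rightarrow> 'a) \<Rightarrow> bool" where
  "expansive G \<phi> \<longleftrightarrow>
     (\<exists>S. subgroup S G \<and> finite S \<and>
        (\<forall>F. subgroup F G \<and> finite F \<longrightarrow>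
           (\<exists>n::nat. F \<subseteq> set_sum_list G (\<lambda>k. auto_pow G \<phi> k ` S) [- int n..int n])))"

text \<open>Finitely supported sequences S^(N) and S^(Z), and the shifts.\<close>
abbreviation fs_seq :: "('b, 'c) monoid_scheme \<Rightarrow> ('i \<Rightarrow> 'b) monoid" where
  "fs_seq S \<equiv> sum_group UNIV (\<lambda>_. S)"

definition shift_nat :: "('b, 'c) monoid_scheme \<Rightarrow> (nat \<Rightarrow> 'b) \<Rightarrow> nat \<Rightarrow> 'b" where
  "shift_nat S x = (\<lambda>k. if k = 0 then \<one>\<^bsub>S\<^esub> else x (k - 1))"

definition shift_int :: "(int \<Rightarrow> 'b) \<Rightarrow> int \<Rightarrow> 'b" where
  "shift_int x = (\<lambda>k. x (k - 1))"

definition is_factor :: "('h, 'n) monoid_scheme \<Rightarrow> ('h \<Rightarrow> 'h) \<Rightarrow> ('a, 'm) monoid_scheme \<Rightarrow> ('a \<Rightarrow> 'a) \<Rightarrow> bool" where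
  "is_factor H \<psi> G \<phi> \<longleftrightarrow>
     (\<exists>\<pi>. \<pi> \<in> hom H G \<and> \<pi> ` carrier H = carrier G \<and> (\<forall>x \<in> carrier H. \<pi> (\<psi> x) = \<phi> (\<pi> x)))"

end

theory Submission
  imports Defs
begin

text \<open>
  Let \<iota>_k embed S at coordinate k of S^(I). A factor map \<pi> from the shift on S^(I) onto G
  is determined by D = \<pi> \<circ> \<iota>_0: since \<pi> intertwines the shifts, \<pi>(\<iota>_k s) = \<phi>^k(D s),
  and \<pi>(y) is the product of the \<phi>^k(D(y_k)) over the finite support of y. Hence the finite
  subgroup D(S) witnesses (positive) expansivity. Conversely, if a finite subgroup S witnesses
  it, the map (s_k) \<mapsto> \<Prod>_k \<phi>^k(s_k) on S^(I) intertwines the shift with \<phi>, and it is onto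
  because in a torsion group every element generates a finite subgroup, which expansivity
  places inside a finite product of the \<phi>^k(S). For automorphisms the same argument runs
  with integer powers, going down in k by injectivity of \<phi>.
\<close>

definition window_expansive ::
    "('a, 'm) monoid_scheme \<Rightarrow> ('i \<Rightarrow> 'a \<Rightarrow> 'a) \<Rightarrow> (nat \<Rightarrow> 'i list) \<Rightarrow> bool" where
  "window_expansive G P W \<longleftrightarrow>
     (\<exists>S. subgroup S G \<and> finite S \<and>
        (\<forall>F. subgroup F G \<and> finite F \<longrightarrow> (\<exists>n. F \<subseteq> set_sum_list G (\<lambda>k. P k ` S) (W n))))"

lemma positively_expansive_iff_window_expansive:
  "positively_expansive G \<phi> \<longleftrightarrow> window_expansive G (\<lambda>k. \<phi> ^^ k) (\<lambda>n. [0..<Suc n])"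
  unfolding positively_expansive_def window_expansive_def ..

lemma expansive_iff_window_expansive:
  "expansive G \<phi> \<longleftrightarrow> window_expansive G (auto_pow G \<phi>) (\<lambda>n. [- int n..int n])"
  unfolding expansive_def window_expansive_def ..

lemma (in comm_monoid) set_sum_list_eq_finprods:
  assumes "distinct ks" and "\<And>k. k \<in> set ks \<Longrightarrow> A k \<subseteq> carrier G"
  shows "set_sum_list G A ks = {finprod G f (set ks) | f. \<forall>k \<in> set ks. f k \<in> A k}"
  using assms
proof (induction ks)
  case Nil
  show ?case by (simp add: set_sum_list_def)
next
  case (Cons k ks)
  have k: "k \<notin> set ks" and A: "\<And>j. j \<in> set (k # ks) \<Longrightarrow> A j \<subseteq> carrier G"
    using Cons.prems by auto
  have finprod_Cons: "finprod G f (set (k # ks)) = f k \<otimes> finprod G f (set ks)"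
    if "\<forall>j \<in> set (k # ks). f j \<in> A j" for f
  proof -
    have "f \<in> set ks \<rightarrow> carrier G" and "f k \<in> carrier G"
      using that A by auto
    then show ?thesis
      using k by simp
  qed
  have "set_sum_list G A (k # ks) = A k <#> {finprod G f (set ks) | f. \<forall>j \<in> set ks. f j \<in> A j}"
    using Cons by (simp add: set_sum_list_def)
  also have "\<dots> = {finprod G f (set (k # ks)) | f. \<forall>j \<in> set (k # ks). f j \<in> A j}"
  proof (intro Set.set_eqI iffI)
    fix x assume "x \<in> A k <#> {finprod G f (set ks) | f. \<forall>j \<in> set ks. f j \<in> A j}"
    then obtain a f where a: "a \<in> A k" and f: "\<forall>j \<in> set ks. f j \<in> A j"
      and x: "x = a \<otimes> finprod G f (set ks)"
      unfolding set_mult_def by blast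
    have f_carrier: "f \<in> set ks \<rightarrow> carrier G"
      using f A by auto
    have "finprod G (f(k := a)) (set ks) = finprod G f (set ks)"
      using k f_carrier by (intro finprod_cong') auto
    then have "x = finprod G (f(k := a)) (set (k # ks))"
      using finprod_Cons[of "f(k := a)"] a f x by auto
    moreover have "\<forall>j \<in> set (k # ks). (f(k := a)) j \<in> A j"
      using a f by auto
    ultimately show "x \<in> {finprod G f (set (k # ks)) | f. \<forall>j \<in> set (k # ks). f j \<in> A j}"
      by blast
  next
    fix x assume "x \<in> {finprod G f (set (k # ks)) | f. \<forall>j \<in> set (k # ks). f j \<in> A j}"
    then obtain f where "\<forall>j \<in> set (k # ks). f j \<in> A j" and "x = finprod G f (set (k # ks))"
      by blast
    then show "x \<in> A k <#> {finprod G f (set ks) | f. \<forall>j \<in> set ks. f j \<in> A j}"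
      using finprod_Cons unfolding set_mult_def by force
  qed
  finally show ?case .
qed

definition single_seq :: "('b, 'c) monoid_scheme \<Rightarrow> 'i \<Rightarrow> 'b \<Rightarrow> 'i \<Rightarrow> 'b" where
  "single_seq S k s = (\<lambda>i. if i = k then s else \<one>\<^bsub>S\<^esub>)"

lemma carrier_fs_seq:
  assumes "group S"
  shows "carrier (fs_seq S) = {y. (\<forall>i. y i \<in> carrier S) \<and> finite {i. y i \<noteq> \<one>\<^bsub>S\<^esub>}}"
  using assms by (auto simp: carrier_sum_group PiE_UNIV_domain)

lemma single_seq_hom:
  assumes "group S"
  shows "single_seq S k \<in> hom S (fs_seq S)"
proof -
  interpret S: group S by fact
  have "single_seq S k s \<in> carrier (fs_seq S)" if "s \<in> carrier S" for s
    using that by (auto simp: carrier_fs_seq[OF assms] single_seq_def intro: finite_subset[of _ "{k}"])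
  then show ?thesis
    by (auto simp: hom_def single_seq_def fun_eq_iff)
qed

lemma (in comm_group) hom_fs_seq_eq_finprod:
  assumes S: "group S" and \<pi>: "\<pi> \<in> hom (fs_seq S) G"
    and "finite K" and "y \<in> carrier (fs_seq S)" and "{i. y i \<noteq> \<one>\<^bsub>S\<^esub>} \<subseteq> K"
  shows "\<pi> y = finprod G (\<lambda>k. \<pi> (single_seq S k (y k))) K"
  using \<open>finite K\<close> assms(4,5)
proof (induction K arbitrary: y rule: finite_induct)
  case empty
  then have "y = \<one>\<^bsub>fs_seq S\<^esub>"
    by (auto simp: fun_eq_iff)
  then show ?case
    using hom_one[OF \<pi>] S by (simp add: restrict_UNIV)
next
  case (insert k K)
  interpret S: group S by fact
  have y: "\<And>i. y i \<in> carrier S"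
    using insert.prems by (simp add: carrier_fs_seq[OF S])
  have single_carrier: "\<And>j i. single_seq S j (y i) \<in> carrier (fs_seq S)"
    using hom_in_carrier[OF single_seq_hom[OF S] y] .
  define y' where "y' = y(k := \<one>\<^bsub>S\<^esub>)"
  have y': "y' \<in> carrier (fs_seq S)"
    using insert.prems y by (auto simp: carrier_fs_seq[OF S] y'_def intro: finite_subset)
  have "y = single_seq S k (y k) \<otimes>\<^bsub>fs_seq S\<^esub> y'"
    using y by (auto simp: fun_eq_iff single_seq_def y'_def)
  then have "\<pi> y = \<pi> (single_seq S k (y k) \<otimes>\<^bsub>fs_seq S\<^esub> y')"
    by (rule arg_cong)
  also have "\<dots> = \<pi> (single_seq S k (y k)) \<otimes> \<pi> y'"
    by (rule hom_mult[OF \<pi> single_carrier y'])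
  also have "\<pi> y' = finprod G (\<lambda>j. \<pi> (single_seq S j (y' j))) K"
  proof (rule insert.IH[OF y'])
    show "{i. y' i \<noteq> \<one>\<^bsub>S\<^esub>} \<subseteq> K"
      using insert.prems(2) by (auto simp: y'_def)
  qed
  also have "\<dots> = finprod G (\<lambda>j. \<pi> (single_seq S j (y j))) K"
    using insert.hyps hom_in_carrier[OF \<pi> single_carrier] by (intro finprod_cong') (auto simp: y'_def)
  finally show ?case
    using insert.hyps hom_in_carrier[OF \<pi> single_carrier] by simp
qed

lemma (in comm_group) factor_value_in_window:
  assumes S: "group S" and \<pi>: "\<pi> \<in> hom (fs_seq S) G" and P: "\<And>k. P k \<in> hom G G"
    and \<pi>_single: "\<And>k s. s \<in> carrier S \<Longrightarrow> \<pi> (single_seq S k s) = P k (\<pi> (single_seq S i0 s))"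
    and "distinct ks" and y: "y \<in> carrier (fs_seq S)" and support: "{i. y i \<noteq> \<one>\<^bsub>S\<^esub>} \<subseteq> set ks"
  shows "\<pi> y \<in> set_sum_list G (\<lambda>k. P k ` (\<pi> \<circ> single_seq S i0) ` carrier S) ks"
proof -
  have D: "\<pi> \<circ> single_seq S i0 \<in> hom S G"
    by (rule Group.hom_compose[OF single_seq_hom[OF S] \<pi>])
  have y_carrier: "\<And>i. y i \<in> carrier S"
    using y by (simp add: carrier_fs_seq[OF S])
  have "\<pi> y = finprod G (\<lambda>k. \<pi> (single_seq S k (y k))) (set ks)"
    using hom_fs_seq_eq_finprod[OF S \<pi> _ y support] by simp
  moreover have "\<pi> (single_seq S k (y k)) \<in> P k ` (\<pi> \<circ> single_seq S i0) ` carrier S" for k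
  proof -
    have "\<pi> (single_seq S k (y k)) = P k ((\<pi> \<circ> single_seq S i0) (y k))"
      unfolding comp_def by (rule \<pi>_single[OF y_carrier])
    then show ?thesis
      using y_carrier by blast
  qed
  moreover have "set_sum_list G (\<lambda>k. P k ` (\<pi> \<circ> single_seq S i0) ` carrier S) ks
      = {finprod G f (set ks) | f. \<forall>k \<in> set ks. f k \<in> P k ` (\<pi> \<circ> single_seq S i0) ` carrier S}"
  proof (rule set_sum_list_eq_finprods[OF \<open>distinct ks\<close>])
    show "P k ` (\<pi> \<circ> single_seq S i0) ` carrier S \<subseteq> carrier G" for k
      using hom_carrier[OF D] hom_carrier[OF P] by blast
  qed
  ultimately show ?thesis
    by blast
qed

lemma (in comm_group) factor_imp_window_expansive:
  assumes S: "group S" "finite (carrier S)"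
    and \<pi>: "\<pi> \<in> hom (fs_seq S) G" "\<pi> ` carrier (fs_seq S) = carrier G"
    and P: "\<And>k. P k \<in> hom G G"
    and \<pi>_single: "\<And>k s. s \<in> carrier S \<Longrightarrow> \<pi> (single_seq S k s) = P k (\<pi> (single_seq S i0 s))"
    and W: "\<And>n. distinct (W n)" "\<And>K. finite K \<Longrightarrow> \<exists>n. K \<subseteq> set (W n)"
  shows "window_expansive G P W"
proof -
  let ?S0 = "(\<pi> \<circ> single_seq S i0) ` carrier S"
  have "\<pi> \<circ> single_seq S i0 \<in> hom S G"
    by (rule Group.hom_compose[OF single_seq_hom[OF S(1)] \<pi>(1)])
  then have "subgroup ?S0 G"
    using S(1) is_group by (intro group_hom.img_is_subgroup) (simp add: group_hom_def group_hom_axioms_def)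
  moreover have "finite ?S0"
    using S(2) by simp
  moreover have "\<exists>n. F \<subseteq> set_sum_list G (\<lambda>k. P k ` ?S0) (W n)"
    if "finite F" and "F \<subseteq> carrier G" for F
  proof -
    have "\<forall>x \<in> F. \<exists>z. z \<in> carrier (fs_seq S) \<and> \<pi> z = x"
      using \<open>F \<subseteq> carrier G\<close> unfolding \<pi>(2)[symmetric] by blast
    then obtain y where y: "\<And>x. x \<in> F \<Longrightarrow> y x \<in> carrier (fs_seq S) \<and> \<pi> (y x) = x"
      using bchoice by metis
    have "finite (\<Union>x \<in> F. {i. y x i \<noteq> \<one>\<^bsub>S\<^esub>})"
      using \<open>finite F\<close> y by (auto simp: carrier_fs_seq[OF S(1)])
    then obtain n where "(\<Union>x \<in> F. {i. y x i \<noteq> \<one>\<^bsub>S\<^esub>}) \<subseteq> set (W n)"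
      using W(2) by blast
    then have "\<pi> (y x) \<in> set_sum_list G (\<lambda>k. P k ` ?S0) (W n)" if "x \<in> F" for x
      using y[OF that] that by (intro factor_value_in_window[OF S(1) \<pi>(1) P \<pi>_single W(1)]) auto
    then show ?thesis
      using y by auto
  qed
  ultimately show ?thesis
    unfolding window_expansive_def by (meson subgroup.subset)
qed

lemma (in group) finite_generate_torsion_element:
  assumes "x \<in> carrier G" and "n > 0" and "x [^] (n :: nat) = \<one>"
  shows "finite (generate G {x})"
proof -
  have "ord x \<noteq> 0"
    using assms ord_eq_0 by auto
  then show ?thesis
    using generate_pow_card[OF assms(1)] card.infinite by force
qed

lemma (in group) torsion_window_expansive_covers:
  assumes "torsion_group G" and "window_expansive G P W"
  obtains S where "subgroup S G" and "finite S"
    and "\<And>x. x \<in> carrier G \<Longrightarrow> \<exists>n. x \<in> set_sum_list G (\<lambda>k. P k ` S) (W n)"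
proof -
  obtain S where S: "subgroup S G" "finite S"
    and cover: "\<And>F. subgroup F G \<Longrightarrow> finite F \<Longrightarrow> \<exists>n. F \<subseteq> set_sum_list G (\<lambda>k. P k ` S) (W n)"
    using assms(2) unfolding window_expansive_def by blast
  have "\<exists>n. x \<in> set_sum_list G (\<lambda>k. P k ` S) (W n)" if x: "x \<in> carrier G" for x
  proof -
    obtain m :: nat where "m > 0" and "x [^] m = \<one>"
      using assms(1) x unfolding torsion_group_def by blast
    then have "finite (generate G {x})"
      using finite_generate_torsion_element x by blast
    moreover have "subgroup (generate G {x}) G"
      using x by (intro generate_is_subgroup) auto
    ultimately show ?thesis
      using cover generate.incl[of x "{x}" G] by blast
  qed
  with S that show ?thesis
    by blast
qed

lemma (in comm_group) finite_subgroup_image_of_nat_group: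
  assumes "subgroup H G" and "finite H"
  shows "\<exists>(S :: nat monoid) e. comm_group S \<and> finite (carrier S) \<and> e \<in> hom S G \<and> e ` carrier S = H"
proof -
  obtain d :: "'a \<Rightarrow> nat" where d: "inj_on d H"
    using finite_imp_inj_to_nat_seg[OF \<open>finite H\<close>] by blast
  let ?H = "subgroup_generated G H"
  define S where "S = image_group d ?H"
  have carrier_H: "carrier ?H = H"
    by (simp add: assms(1) subgroup.carrier_subgroup_generated_subgroup)
  have d_iso: "d \<in> iso ?H S"
    unfolding S_def by (rule inj_imp_image_group_iso) (simp add: carrier_H d)
  have "comm_group (S\<lparr>one := d \<one>\<^bsub>?H\<^esub>\<rparr>)"
    by (rule comm_group.iso_imp_img_comm_group[OF abelian_subgroup_generated d_iso]) (rule comm_group_axioms)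
  then have S: "comm_group S"
    by (simp add: S_def image_group_def)
  have e_iso: "inv_into (carrier ?H) d \<in> iso S ?H"
    by (rule group.iso_set_sym[OF group_subgroup_generated d_iso])
  then have "inv_into (carrier ?H) d \<in> hom S G"
    by (simp add: iso_def hom_into_subgroup_eq_gen[OF is_group])
  moreover have "inv_into (carrier ?H) d ` carrier S = H"
    using e_iso carrier_H by (simp add: iso_def bij_betw_def)
  moreover have "finite (carrier S)"
    using \<open>finite H\<close> by (simp add: S_def image_group_carrier carrier_H)
  ultimately show ?thesis
    using S by blast
qed

lemma (in comm_monoid) gfinprod_reindex:
  assumes "inj_on \<sigma> A" and "g \<in> \<sigma> ` A \<rightarrow> carrier G"
  shows "gfinprod G g (\<sigma> ` A) = gfinprod G (g \<circ> \<sigma>) A"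
proof -
  have support: "{x \<in> \<sigma> ` A. g x \<noteq> \<one>} = \<sigma> ` {x \<in> A. g (\<sigma> x) \<noteq> \<one>}"
    by auto
  have inj: "inj_on \<sigma> {x \<in> A. g (\<sigma> x) \<noteq> \<one>}"
    using assms(1) by (rule inj_on_subset) auto
  have "finprod G g (\<sigma> ` {x \<in> A. g (\<sigma> x) \<noteq> \<one>}) = finprod G (\<lambda>x. g (\<sigma> x)) {x \<in> A. g (\<sigma> x) \<noteq> \<one>}"
    by (rule finprod_reindex) (use assms(2) inj in auto)
  then show ?thesis
    unfolding gfinprod_def support using finite_image_iff[OF inj] by (simp add: comp_def)
qed

lemma (in comm_group) hom_finprod:
  assumes "comm_group H" and "h \<in> hom G H" and "finite A" and "f \<in> A \<rightarrow> carrier G"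
  shows "h (finprod G f A) = finprod H (h \<circ> f) A"
proof -
  interpret H: comm_group H by fact
  show ?thesis
    using assms(3,4)
  proof (induction A rule: finite_induct)
    case empty
    show ?case
      using hom_one[OF assms(2) is_group H.is_group] by simp
  next
    case (insert x A)
    have "(\<lambda>a. h (f a)) \<in> A \<rightarrow> carrier H" and "h (f x) \<in> carrier H"
      using insert.prems hom_in_carrier[OF assms(2)] by (auto simp: Pi_iff)
    then show ?case
      using insert hom_mult[OF assms(2)] by simp
  qed
qed

lemma (in comm_group) hom_gfinprod:
  assumes "comm_group H" and "h \<in> hom G H" and "f \<in> A \<rightarrow> carrier G" and "finite {x \<in> A. f x \<noteq> \<one>}"
  shows "h (gfinprod G f A) = gfinprod H (h \<circ> f) A"
proof -
  interpret H: comm_group H by fact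
  let ?B = "{x \<in> A. f x \<noteq> \<one>}"
  have h_carrier: "h \<circ> f \<in> A \<rightarrow> carrier H"
    using assms(3) hom_in_carrier[OF assms(2)] by (auto simp: Pi_iff)
  have "gfinprod H (h \<circ> f) A = gfinprod H (h \<circ> f) ?B"
    using h_carrier hom_one[OF assms(2) is_group H.is_group]
    by (intro H.gfinprod_mono_neutral_cong_right) auto
  also have "\<dots> = finprod H (h \<circ> f) ?B"
    using h_carrier assms(4) by (intro H.gfinprod_eq_finprod) auto
  also have "\<dots> = h (finprod G f ?B)"
    using assms by (intro hom_finprod[symmetric]) auto
  finally show ?thesis
    using assms(4) by (simp add: gfinprod_def)
qed

definition orbit_map ::
    "('a, 'm) monoid_scheme \<Rightarrow> ('i \<Rightarrow> 'a \<Rightarrow> 'a) \<Rightarrow> ('b \<Rightarrow> 'a) \<Rightarrow> ('i \<Rightarrow> 'b) \<Rightarrow> 'a" where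
  "orbit_map G P e y = gfinprod G (\<lambda>k. P k (e (y k))) UNIV"

lemma (in comm_group) orbit_map_hom:
  assumes "group S" and "e \<in> hom S G" and "\<And>k. P k \<in> hom G G"
  shows "orbit_map G P e \<in> hom (fs_seq S) G"
proof -
  have "\<And>k. (\<lambda>s. P k (e s)) \<in> hom S G"
    using Group.hom_compose[OF assms(2,3)] by (simp add: comp_def)
  then show ?thesis
    unfolding orbit_map_def using assms(1) by (intro hom_group_sum) auto
qed

lemma (in comm_group) orbit_map_onto:
  assumes S: "group S" and e: "e \<in> hom S G" and P: "\<And>k. P k \<in> hom G G" and W: "\<And>n. distinct (W n)"
    and cover: "\<And>x. x \<in> carrier G \<Longrightarrow> \<exists>n. x \<in> set_sum_list G (\<lambda>k. P k ` e ` carrier S) (W n)"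
  shows "orbit_map G P e ` carrier (fs_seq S) = carrier G"
proof
  show "orbit_map G P e ` carrier (fs_seq S) \<subseteq> carrier G"
    using hom_carrier[OF orbit_map_hom[OF S e P]] .
next
  interpret S: group S by fact
  have Pe: "\<And>k s. s \<in> carrier S \<Longrightarrow> P k (e s) \<in> carrier G"
    using hom_in_carrier[OF P] hom_in_carrier[OF e] by blast
  show "carrier G \<subseteq> orbit_map G P e ` carrier (fs_seq S)"
  proof
    fix x assume "x \<in> carrier G"
    then obtain n where "x \<in> set_sum_list G (\<lambda>k. P k ` e ` carrier S) (W n)"
      using cover by blast
    moreover have "set_sum_list G (\<lambda>k. P k ` e ` carrier S) (W n)
        = {finprod G f (set (W n)) | f. \<forall>k \<in> set (W n). f k \<in> P k ` e ` carrier S}"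
      using W Pe by (intro set_sum_list_eq_finprods) auto
    ultimately obtain f where f: "\<forall>k \<in> set (W n). f k \<in> P k ` e ` carrier S"
      and x: "x = finprod G f (set (W n))"
      by blast
    then have "\<forall>k \<in> set (W n). \<exists>t. t \<in> carrier S \<and> f k = P k (e t)"
      by blast
    then obtain s where s: "\<forall>k \<in> set (W n). s k \<in> carrier S \<and> f k = P k (e (s k))"
      using bchoice by metis
    define y where "y k = (if k \<in> set (W n) then s k else \<one>\<^bsub>S\<^esub>)" for k
    have y: "y \<in> carrier (fs_seq S)"
      using s by (auto simp: carrier_fs_seq[OF S] y_def intro: finite_subset[of _ "set (W n)"])
    have "orbit_map G P e y = gfinprod G (\<lambda>k. P k (e (y k))) (set (W n))"
      unfolding orbit_map_def
      using y Pe hom_one[OF e S is_group] hom_one[OF P is_group is_group]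
      by (intro gfinprod_mono_neutral_cong_right) (auto simp: carrier_fs_seq[OF S] y_def)
    also have "\<dots> = finprod G f (set (W n))"
      using s Pe by (auto simp: y_def intro: finprod_cong')
    finally show "x \<in> orbit_map G P e ` carrier (fs_seq S)"
      using x y by (metis image_eqI)
  qed
qed

text \<open>With \<sigma> = Suc, y' is the unilateral shift of y (which puts \<one> at index 0);
  with \<sigma> k = k + 1 it is the bilateral one.\<close>

lemma (in comm_group) orbit_map_shift:
  assumes S: "group S" and e: "e \<in> hom S G" and P: "\<And>k. P k \<in> hom G G" and \<phi>: "\<phi> \<in> hom G G"
    and \<sigma>: "inj \<sigma>" and P_\<sigma>: "\<And>k x. x \<in> carrier G \<Longrightarrow> P (\<sigma> k) x = \<phi> (P k x)"
    and y: "y \<in> carrier (fs_seq S)"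
    and y'_\<sigma>: "\<And>k. y' (\<sigma> k) = y k" and y'_outside: "\<And>i. i \<notin> range \<sigma> \<Longrightarrow> y' i = \<one>\<^bsub>S\<^esub>"
  shows "orbit_map G P e y' = \<phi> (orbit_map G P e y)"
proof -
  interpret S: group S by fact
  have y_carrier: "\<And>i. y i \<in> carrier S" and y_finite: "finite {i. y i \<noteq> \<one>\<^bsub>S\<^esub>}"
    using y by (auto simp: carrier_fs_seq[OF S])
  have y'_carrier: "\<And>i. y' i \<in> carrier S"
    by (metis rangeE y'_\<sigma> y'_outside y_carrier S.one_closed)
  have Pe: "\<And>k s. s \<in> carrier S \<Longrightarrow> P k (e s) \<in> carrier G"
    using hom_in_carrier[OF P] hom_in_carrier[OF e] by blast
  have Pe_one: "\<And>k. P k (e \<one>\<^bsub>S\<^esub>) = \<one>"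
    using hom_one[OF e S is_group] hom_one[OF P is_group is_group] by simp
  have "orbit_map G P e y' = gfinprod G (\<lambda>k. P k (e (y' k))) (range \<sigma>)"
    unfolding orbit_map_def
    by (rule gfinprod_mono_neutral_cong_right) (auto simp: y'_outside Pe_one Pe y'_carrier)
  also have "\<dots> = gfinprod G ((\<lambda>k. P k (e (y' k))) \<circ> \<sigma>) UNIV"
    using \<sigma> Pe y'_carrier by (intro gfinprod_reindex) auto
  also have "\<dots> = gfinprod G (\<phi> \<circ> (\<lambda>k. P k (e (y k)))) UNIV"
    using Pe y_carrier hom_in_carrier[OF e y_carrier] hom_in_carrier[OF \<phi>]
    by (intro gfinprod_cong) (auto simp: y'_\<sigma> P_\<sigma>)
  also have "\<dots> = \<phi> (orbit_map G P e y)"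
  proof -
    have "finite {k \<in> UNIV. P k (e (y k)) \<noteq> \<one>}"
      by (rule finite_subset[OF _ y_finite]) (auto simp: Pe_one)
    then show ?thesis
      unfolding orbit_map_def using Pe y_carrier
      by (intro hom_gfinprod[symmetric, OF comm_group_axioms \<phi>]) auto
  qed
  finally show ?thesis .
qed

lemma hom_funpow:
  assumes "h \<in> hom G G"
  shows "h ^^ n \<in> hom G G"
proof (induction n)
  case 0
  show ?case by (simp add: hom_def)
next
  case (Suc n)
  show ?case
    unfolding funpow.simps(2) by (rule Group.hom_compose[OF Suc assms])
qed

lemma finite_subset_upt_Suc:
  assumes "finite (K :: nat set)"
  shows "\<exists>n. K \<subseteq> set [0..<Suc n]"
proof -
  obtain m where "\<forall>k \<in> K. k \<le> m"
    using assms finite_nat_set_iff_bounded_le by auto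
  then have "K \<subseteq> set [0..<Suc m]"
    by (auto simp del: upt_Suc)
  then show ?thesis ..
qed

lemma shift_nat_single: "shift_nat S (single_seq S k s) = single_seq S (Suc k) s"
  by (auto simp: shift_nat_def single_seq_def fun_eq_iff)

lemma (in comm_group) shift_nat_factor_imp_positively_expansive:
  assumes \<phi>: "\<phi> \<in> hom G G" and S: "comm_group S" "finite (carrier S)"
    and "is_factor (fs_seq S) (shift_nat S) G \<phi>"
  shows "positively_expansive G \<phi>"
proof -
  interpret S: comm_group S by fact
  obtain \<pi> where \<pi>: "\<pi> \<in> hom (fs_seq S) G" "\<pi> ` carrier (fs_seq S) = carrier G"
    and \<pi>_shift: "\<And>y. y \<in> carrier (fs_seq S) \<Longrightarrow> \<pi> (shift_nat S y) = \<phi> (\<pi> y)"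
    using assms(4) unfolding is_factor_def by blast
  have \<pi>_single: "\<pi> (single_seq S k s) = (\<phi> ^^ k) (\<pi> (single_seq S 0 s))" if "s \<in> carrier S" for k s
  proof (induction k)
    case (Suc k)
    have "\<pi> (single_seq S (Suc k) s) = \<phi> (\<pi> (single_seq S k s))"
      using \<pi>_shift[OF hom_in_carrier[OF single_seq_hom[OF S.is_group] that]]
      by (simp add: shift_nat_single)
    with Suc.IH show ?case
      by simp
  qed simp
  show ?thesis
    unfolding positively_expansive_iff_window_expansive
    using factor_imp_window_expansive[OF S.is_group S(2) \<pi> hom_funpow[OF \<phi>] \<pi>_single
        distinct_upt finite_subset_upt_Suc] .
qed

lemma (in comm_group) positively_expansive_imp_shift_nat_factor:
  assumes "torsion_group G" and \<phi>: "\<phi> \<in> hom G G" and "positively_expansive G \<phi>"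
  shows "\<exists>S :: nat monoid. comm_group S \<and> finite (carrier S) \<and> is_factor (fs_seq S) (shift_nat S) G \<phi>"
proof -
  obtain S0 where "subgroup S0 G" and "finite S0"
    and cover: "\<And>x. x \<in> carrier G \<Longrightarrow> \<exists>n. x \<in> set_sum_list G (\<lambda>k. (\<phi> ^^ k) ` S0) [0..<Suc n]"
    using torsion_window_expansive_covers[OF assms(1)] assms(3)
    unfolding positively_expansive_iff_window_expansive by blast
  then obtain S :: "nat monoid" and e where S: "comm_group S" "finite (carrier S)"
    and e: "e \<in> hom S G" "e ` carrier S = S0"
    using finite_subgroup_image_of_nat_group by blast
  interpret S: comm_group S by fact
  let ?\<pi> = "orbit_map G (\<lambda>k. \<phi> ^^ k) e"
  have "?\<pi> \<in> hom (fs_seq S) G"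
    by (rule orbit_map_hom[OF S.is_group e(1) hom_funpow[OF \<phi>]])
  moreover have "?\<pi> ` carrier (fs_seq S) = carrier G"
  proof (rule orbit_map_onto[where W = "\<lambda>n. [0..<Suc n]", OF S.is_group e(1) hom_funpow[OF \<phi>] distinct_upt])
    show "\<exists>n. x \<in> set_sum_list G (\<lambda>k. (\<phi> ^^ k) ` e ` carrier S) [0..<Suc n]" if "x \<in> carrier G" for x
      using cover[OF that] by (simp only: e(2))
  qed
  moreover have "?\<pi> (shift_nat S y) = \<phi> (?\<pi> y)" if "y \<in> carrier (fs_seq S)" for y
    by (rule orbit_map_shift[OF S.is_group e(1) hom_funpow[OF \<phi>] \<phi> _ _ that, where \<sigma> = Suc])
       (auto simp: shift_nat_def image_iff gr0_conv_Suc)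
  ultimately show ?thesis
    unfolding is_factor_def using S by blast
qed

lemma auto_pow_hom:
  assumes "group G" and "\<phi> \<in> iso G G"
  shows "auto_pow G \<phi> k \<in> hom G G"
proof -
  have "\<phi> \<in> hom G G" and "inv_into (carrier G) \<phi> \<in> hom G G"
    using assms(2) group.iso_set_sym[OF assms] by (simp_all add: iso_def)
  then show ?thesis
    by (simp add: auto_pow_def hom_funpow)
qed

lemma auto_pow_succ:
  assumes "group G" and \<phi>: "\<phi> \<in> iso G G" and "x \<in> carrier G"
  shows "auto_pow G \<phi> (k + 1) x = \<phi> (auto_pow G \<phi> k x)"
proof (cases "k \<ge> 0")
  case True
  then show ?thesis
    by (simp add: auto_pow_def nat_add_distrib)
next
  case False
  define \<psi> where "\<psi> = inv_into (carrier G) \<phi>"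
  define m where "m = nat (- k - 1)"
  have "nat (- k) = Suc m"
    using False by (simp add: m_def)
  then have "auto_pow G \<phi> k x = \<psi> ((\<psi> ^^ m) x)"
    using False by (simp add: auto_pow_def \<psi>_def)
  moreover have "auto_pow G \<phi> (k + 1) x = (\<psi> ^^ m) x"
    using False by (cases "k = -1") (simp_all add: auto_pow_def \<psi>_def m_def)
  moreover have "(\<psi> ^^ m) x \<in> carrier G"
    using hom_in_carrier[OF hom_funpow assms(3)] group.iso_set_sym[OF assms(1,2)]
    by (simp add: \<psi>_def iso_def)
  moreover have "\<phi> (\<psi> z) = z" if "z \<in> carrier G" for z
    using \<phi> that by (simp add: \<psi>_def iso_def bij_betw_def f_inv_into_f)
  ultimately show ?thesis
    by simp
qed

lemma auto_pow_orbit_eq: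
  assumes "group G" and \<phi>: "\<phi> \<in> iso G G"
    and a: "\<And>j. a j \<in> carrier G" and a_succ: "\<And>j. a (j + 1) = \<phi> (a j)"
  shows "a k = auto_pow G \<phi> k (a 0)"
proof (induction k rule: int_induct[where k = 0])
  case base
  show ?case
    by (simp add: auto_pow_def)
next
  case (step1 i)
  then show ?case
    using a_succ auto_pow_succ[OF assms(1,2) a] by simp
next
  case (step2 i)
  have "\<phi> (a (i - 1)) = \<phi> (auto_pow G \<phi> (i - 1) (a 0))"
    using a_succ[of "i - 1"] auto_pow_succ[OF assms(1,2) a, of "i - 1"] step2.IH by simp
  moreover have "inj_on \<phi> (carrier G)"
    using \<phi> by (simp add: iso_def bij_betw_def)
  moreover have "auto_pow G \<phi> (i - 1) (a 0) \<in> carrier G"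
    using hom_in_carrier[OF auto_pow_hom[OF assms(1,2)] a] .
  ultimately show ?case
    using a inj_onD by metis
qed

lemma finite_subset_symmetric_upto:
  assumes "finite (K :: int set)"
  shows "\<exists>n. K \<subseteq> set [- int n..int n]"
proof -
  obtain m where "\<forall>k \<in> K. nat \<bar>k\<bar> \<le> m"
    using assms finite_nat_set_iff_bounded_le[of "(\<lambda>k. nat \<bar>k\<bar>) ` K"] by auto
  then have "K \<subseteq> set [- int m..int m]"
    by (force simp: nat_le_iff abs_le_iff)
  then show ?thesis ..
qed

lemma shift_int_single: "shift_int (single_seq S k s) = single_seq S (k + 1) s"
  by (auto simp: shift_int_def single_seq_def fun_eq_iff)

lemma (in comm_group) shift_int_factor_imp_expansive:
  assumes \<phi>: "\<phi> \<in> iso G G" and S: "comm_group S" "finite (carrier S)"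
    and "is_factor (fs_seq S) shift_int G \<phi>"
  shows "expansive G \<phi>"
proof -
  interpret S: comm_group S by fact
  obtain \<pi> where \<pi>: "\<pi> \<in> hom (fs_seq S) G" "\<pi> ` carrier (fs_seq S) = carrier G"
    and \<pi>_shift: "\<And>y. y \<in> carrier (fs_seq S) \<Longrightarrow> \<pi> (shift_int y) = \<phi> (\<pi> y)"
    using assms(4) unfolding is_factor_def by blast
  have \<pi>_single: "\<pi> (single_seq S k s) = auto_pow G \<phi> k (\<pi> (single_seq S 0 s))"
    if s: "s \<in> carrier S" for k s
  proof (rule auto_pow_orbit_eq[OF is_group \<phi>])
    show "\<pi> (single_seq S j s) \<in> carrier G" for j
      using hom_in_carrier[OF \<pi>(1) hom_in_carrier[OF single_seq_hom[OF S.is_group] s]] .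
    show "\<pi> (single_seq S (j + 1) s) = \<phi> (\<pi> (single_seq S j s))" for j
      using \<pi>_shift[OF hom_in_carrier[OF single_seq_hom[OF S.is_group] s]] by (simp add: shift_int_single)
  qed
  show ?thesis
    unfolding expansive_iff_window_expansive
    using factor_imp_window_expansive[OF S.is_group S(2) \<pi> auto_pow_hom[OF is_group \<phi>] \<pi>_single
        distinct_upto finite_subset_symmetric_upto] .
qed

lemma (in comm_group) expansive_imp_shift_int_factor:
  assumes "torsion_group G" and \<phi>: "\<phi> \<in> iso G G" and "expansive G \<phi>"
  shows "\<exists>S :: nat monoid. comm_group S \<and> finite (carrier S) \<and> is_factor (fs_seq S) shift_int G \<phi>"
proof -
  obtain S0 where "subgroup S0 G" and "finite S0"
    and cover: "\<And>x. x \<in> carrier G \<Longrightarrow> \<exists>n. x \<in> set_sum_list G (\<lambda>k. auto_pow G \<phi> k ` S0) [- int n..int n]"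
    using torsion_window_expansive_covers[OF assms(1)] assms(3)
    unfolding expansive_iff_window_expansive by blast
  then obtain S :: "nat monoid" and e where S: "comm_group S" "finite (carrier S)"
    and e: "e \<in> hom S G" "e ` carrier S = S0"
    using finite_subgroup_image_of_nat_group by blast
  interpret S: comm_group S by fact
  have P: "\<And>k. auto_pow G \<phi> k \<in> hom G G"
    using auto_pow_hom[OF is_group \<phi>] .
  let ?\<pi> = "orbit_map G (auto_pow G \<phi>) e"
  have "?\<pi> \<in> hom (fs_seq S) G"
    by (rule orbit_map_hom[OF S.is_group e(1) P])
  moreover have "?\<pi> ` carrier (fs_seq S) = carrier G"
  proof (rule orbit_map_onto[where W = "\<lambda>n. [- int n..int n]", OF S.is_group e(1) P distinct_upto])
    show "\<exists>n. x \<in> set_sum_list G (\<lambda>k. auto_pow G \<phi> k ` e ` carrier S) [- int n..int n]"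
      if "x \<in> carrier G" for x
      using cover[OF that] by (simp only: e(2))
  qed
  moreover have "?\<pi> (shift_int y) = \<phi> (?\<pi> y)" if "y \<in> carrier (fs_seq S)" for y
  proof (rule orbit_map_shift[OF S.is_group e(1) P _ _ _ that, where \<sigma> = "\<lambda>k. k + 1"])
    show "\<phi> \<in> hom G G"
      using \<phi> by (simp add: iso_def)
    show "inj (\<lambda>k :: int. k + 1)"
      by (simp add: inj_def)
    show "i \<notin> range (\<lambda>k. k + 1) \<Longrightarrow> shift_int y i = \<one>\<^bsub>S\<^esub>" for i :: int
      by (metis add.commute diff_add_cancel rangeI)
  qed (simp_all add: shift_int_def auto_pow_succ[OF is_group \<phi>])
  ultimately show ?thesis
    unfolding is_factor_def using S by blast
qed

lemma (in comm_group) positively_expansive_iff_shift_nat_factor: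
  assumes "torsion_group G" and "\<phi> \<in> hom G G"
  shows "positively_expansive G \<phi> \<longleftrightarrow>
    (\<exists>S :: nat monoid. comm_group S \<and> finite (carrier S) \<and> is_factor (fs_seq S) (shift_nat S) G \<phi>)"
  using positively_expansive_imp_shift_nat_factor[OF assms] shift_nat_factor_imp_positively_expansive[OF assms(2)]
  by blast

lemma (in comm_group) expansive_iff_shift_int_factor:
  assumes "torsion_group G" and "\<phi> \<in> iso G G"
  shows "expansive G \<phi> \<longleftrightarrow>
    (\<exists>S :: nat monoid. comm_group S \<and> finite (carrier S) \<and> is_factor (fs_seq S) shift_int G \<phi>)"
  using expansive_imp_shift_int_factor[OF assms] shift_int_factor_imp_expansive[OF assms(2)]
  by blast

theorem proposition2p6:
  fixes G :: "('a, 'm) monoid_scheme" and \<phi> :: "'a \<Rightarrow> 'a"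
  assumes "comm_group G" and "torsion_group G"
  shows "(\<phi> \<in> hom G G \<longrightarrow>
            ((positively_expansive G \<phi> \<longleftrightarrow>
               (\<exists>S :: nat monoid. comm_group S \<and> finite (carrier S) \<and>
                  is_factor (fs_seq S) (shift_nat S) G \<phi>))
             \<and> (\<forall>S :: ('b, 'c) monoid_scheme. comm_group S \<and> finite (carrier S) \<and>
                  is_factor (fs_seq S) (shift_nat S) G \<phi> \<longrightarrow> positively_expansive G \<phi>)))
       \<and> (\<phi> \<in> iso G G \<longrightarrow>
            ((expansive G \<phi> \<longleftrightarrow>
               (\<exists>S :: nat monoid. comm_group S \<and> finite (carrier S) \<and>
                  is_factor (fs_seq S) shift_int G \<phi>))
             \<and> (\<forall>S :: ('b, 'c) monoid_scheme. comm_group S \<and> finite (carrier S) \<and>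
                  is_factor (fs_seq S) shift_int G \<phi> \<longrightarrow> expansive G \<phi>)))"
proof -
  interpret comm_group G by fact
  show ?thesis
    by (intro conjI impI allI;
        use positively_expansive_iff_shift_nat_factor[OF assms(2)] expansive_iff_shift_int_factor[OF assms(2)]
          shift_nat_factor_imp_positively_expansive shift_int_factor_imp_expansive in blast)
qed

end
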